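(* There exists a gadget $H$ (in the sense defined in the context) among whose half-edges are three distinguished half-edges $e_1,e_2,e_3$, such that: (a) $\rho(v)\le 1$ and $\delta(v)\le 1$ for every vertex $v$ of $H$; (b) for every assignment in which each of $e_1,e_2,e_3$ is directed either toward its endpoint in $H$ or away from it, with at least one of them directed toward its endpoint, there exists an orientation of $H$ extending this assignment; (c) there is no orientation of $H$ in which all three of $e_1,e_2,e_3$ are directed away from their endpoints in $H$.
   Context: A gadget $H$ consists of a finite simple graph with vertex set $V(H)$ and edge set $E(H)$, a finite set of "half-edges" (unfinished edges), each attached to exactly one vertex of $V(H)$ (its endpoint), and prescribed functions $\rho,\delta,\theta: V(H)\to\mathbb{Z}_{\ge 0}$ with $\rho(v)+\delta(v)+\theta(v)$ equal to the number of edges and half-edges incident to $v$. An orientation of $H$ assigns to each edge of $E(H)$ either one of its two directions or "undirected", and to each half-edge either "directed toward its endpoint", "directed away from its endpoint", or "undirected", such that each vertex $v$ has exactly $\rho(v)$ incident edges/half-edges directed into $v$, exactly $\delta(v)$ directed out of $v$, and exactly $\theta(v)$ undirected. Half-edges other than $e_1,e_2,e_3$ are unconstrained in an orientation. *)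

theory Defs
  imports Main
begin

definition gadget ::
  "'v set \<Rightarrow> 'v set set \<Rightarrow> 'h set \<Rightarrow> ('h \<Rightarrow> 'v) \<Rightarrow>
   ('v \<Rightarrow> nat) \<Rightarrow> ('v \<Rightarrow> nat) \<Rightarrow> ('v \<Rightarrow> nat) \<Rightarrow> bool" where
  "gadget V E Hs endp \<rho> \<delta> \<theta> \<longleftrightarrow>
     finite V \<and> finite Hs \<and>
     (\<forall>e\<in>E. \<exists>u w. u \<noteq> w \<and> u \<in> V \<and> w \<in> V \<and> e = {u, w}) \<and>
     (\<forall>h\<in>Hs. endp h \<in> V) \<and>
     (\<forall>v\<in>V. \<rho> v + \<delta> v + \<theta> v =
        card {e\<in>E. v \<in> e} + card {h\<in>Hs. endp h = v})"

datatype hdir = Toward | Away | Undirected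

text \<open>An orientation: eo assigns to each edge either Some w (directed into its end w)
or None (undirected); ho assigns a direction to each half-edge.\<close>
definition orientation ::
  "'v set \<Rightarrow> 'v set set \<Rightarrow> 'h set \<Rightarrow> ('h \<Rightarrow> 'v) \<Rightarrow>
   ('v \<Rightarrow> nat) \<Rightarrow> ('v \<Rightarrow> nat) \<Rightarrow> ('v \<Rightarrow> nat) \<Rightarrow>
   ('v set \<Rightarrow> 'v option) \<Rightarrow> ('h \<Rightarrow> hdir) \<Rightarrow> bool" where
  "orientation V E Hs endp \<rho> \<delta> \<theta> eo ho \<longleftrightarrow>
     (\<forall>e\<in>E. eo e = None \<or> (\<exists>w\<in>e. eo e = Some w)) \<and>
     (\<forall>v\<in>V.
        card {e\<in>E. v \<in> e \<and> eo e = Some v} + card {h\<in>Hs. endp h = v \<and> ho h = Toward} = \<rho> v \<and>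
        card {e\<in>E. v \<in> e \<and> eo e \<noteq> None \<and> eo e \<noteq> Some v}
          + card {h\<in>Hs. endp h = v \<and> ho h = Away} = \<delta> v \<and>
        card {e\<in>E. v \<in> e \<and> eo e = None} + card {h\<in>Hs. endp h = v \<and> ho h = Undirected} = \<theta> v)"

end

theory Submission imports Defs begin

(* The gadget is a star.  Its centre 0 has rho = 1, delta = 0, theta = 2 and is joined
   by edges to the three leaves 1, 2, 3, which have rho = delta = theta = 1.  Leaf i
   carries the terminal half-edge i (these are e1, e2, e3) and a companion half-edge i+3.

   Impossibility: the centre needs one incoming edge but has no half-edges, so some edge
   {0,i} is directed into 0.  That edge is the single outgoing edge of leaf i, so no
   half-edge at leaf i may point away; in particular terminal i is not directed away.

   Extension: if terminal i is directed toward leaf i, direct {0,i} into the centre, leave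
   companion i+3 undirected, leave the other two edges undirected, and give every other
   companion the direction opposite to its terminal. *)

lemma gadget_finite_edges:
  assumes G: "gadget V E Hs endp \<rho> \<delta> \<theta>"
  shows "finite E"
proof (rule finite_subset)
  show "E \<subseteq> Pow V"
  proof
    fix e assume "e \<in> E"
    then obtain u w where "u \<in> V" "w \<in> V" "e = {u, w}"
      using G unfolding gadget_def by blast
    then show "e \<in> Pow V" by simp
  qed
  have "finite V" using G unfolding gadget_def by blast
  then show "finite (Pow V)" by simp
qed

lemma orientation_incoming_edge:
  assumes G: "gadget V E Hs endp \<rho> \<delta> \<theta>"
    and O: "orientation V E Hs endp \<rho> \<delta> \<theta> eo ho"
    and v: "v \<in> V" and few: "card {h \<in> Hs. endp h = v} < \<rho> v"
  shows "\<exists>e\<in>E. v \<in> e \<and> eo e = Some v"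
proof -
  have "finite Hs" using G unfolding gadget_def by blast
  then have "card {h \<in> Hs. endp h = v \<and> ho h = Toward} \<le> card {h \<in> Hs. endp h = v}"
    by (intro card_mono) auto
  moreover have "card {e \<in> E. v \<in> e \<and> eo e = Some v}
                   + card {h \<in> Hs. endp h = v \<and> ho h = Toward} = \<rho> v"
    using O v unfolding orientation_def by blast
  ultimately have "card {e \<in> E. v \<in> e \<and> eo e = Some v} \<noteq> 0" using few by linarith
  then obtain e where "e \<in> {e \<in> E. v \<in> e \<and> eo e = Some v}"
    by (metis card.empty ex_in_conv)
  then show ?thesis by blast
qed

lemma orientation_outgoing_edge_blocks_away:
  assumes G: "gadget V E Hs endp \<rho> \<delta> \<theta>"
    and O: "orientation V E Hs endp \<rho> \<delta> \<theta> eo ho"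
    and v: "v \<in> V" "\<delta> v \<le> 1"
    and e: "e \<in> E" "v \<in> e" "eo e \<noteq> None" "eo e \<noteq> Some v"
    and h: "h \<in> Hs" "endp h = v"
  shows "ho h \<noteq> Away"
proof
  assume away: "ho h = Away"
  have "finite Hs" using G unfolding gadget_def by blast
  have "finite E" using G by (rule gadget_finite_edges)
  have "1 \<le> card {e \<in> E. v \<in> e \<and> eo e \<noteq> None \<and> eo e \<noteq> Some v}"
    using \<open>finite E\<close> e by (auto simp: Suc_le_eq card_gt_0_iff)
  moreover have "1 \<le> card {h \<in> Hs. endp h = v \<and> ho h = Away}"
    using \<open>finite Hs\<close> h away by (auto simp: Suc_le_eq card_gt_0_iff)
  moreover have "card {e \<in> E. v \<in> e \<and> eo e \<noteq> None \<and> eo e \<noteq> Some v}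
                   + card {h \<in> Hs. endp h = v \<and> ho h = Away} = \<delta> v"
    using O v unfolding orientation_def by blast
  ultimately show False using v by linarith
qed

definition star_V :: "nat set" where "star_V = {0, 1, 2, 3}"
definition star_E :: "nat set set" where "star_E = {{0, 1}, {0, 2}, {0, 3}}"
definition star_H :: "nat set" where "star_H = {1, 2, 3, 4, 5, 6}"
definition star_end :: "nat \<Rightarrow> nat" where "star_end h = (if h \<le> 3 then h else h - 3)"
definition star_in :: "nat \<Rightarrow> nat" where "star_in v = 1"
definition star_out :: "nat \<Rightarrow> nat" where "star_out v = (if v = 0 then 0 else 1)"
definition star_undir :: "nat \<Rightarrow> nat" where "star_undir v = (if v = 0 then 2 else 1)"

text \<open>Unfolds a comprehension over an explicitly enumerated set, so that the cardinality
  conditions of the star become closed arithmetic.\<close>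

lemma Collect_insert_filter:
  "{x \<in> insert a A. P x} = (if P a then insert a {x \<in> A. P x} else {x \<in> A. P x})"
  by auto

lemmas star_simps = star_end_def star_in_def star_out_def star_undir_def doubleton_eq_iff

text \<open>Every vertex has degree three, matching rho + delta + theta.\<close>

lemma star_gadget: "gadget star_V star_E star_H star_end star_in star_out star_undir"
proof -
  have edges: "\<forall>e\<in>star_E. \<exists>u w. u \<noteq> w \<and> u \<in> star_V \<and> w \<in> star_V \<and> e = {u, w}"
  proof
    fix e assume "e \<in> star_E"
    then obtain i where "i \<in> {1, 2, 3}" "e = {0, i}" by (auto simp: star_E_def)
    then have "0 \<noteq> i \<and> 0 \<in> star_V \<and> i \<in> star_V \<and> e = {0, i}" by (auto simp: star_V_def)
    then show "\<exists>u w. u \<noteq> w \<and> u \<in> star_V \<and> w \<in> star_V \<and> e = {u, w}" by blast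
  qed
  have degrees: "\<forall>v\<in>star_V. star_in v + star_out v + star_undir v =
      card {e \<in> star_E. v \<in> e} + card {h \<in> star_H. star_end h = v}"
    by (simp only: star_V_def star_E_def star_H_def Collect_insert_filter ball_simps)
       (simp add: star_simps)
  have endpoints: "\<forall>h\<in>star_H. star_end h \<in> star_V"
    by (simp add: star_H_def star_end_def star_V_def)
  have "finite star_V" "finite star_H" by (simp_all add: star_V_def star_H_def)
  with edges endpoints degrees show ?thesis unfolding gadget_def by blast
qed

text \<open>The centre has no half-edges but needs an incoming item, so some edge {0, i} points
  into it; that edge is the outgoing item of leaf i, so terminal i cannot point away.\<close>

lemma star_some_terminal_not_away:
  assumes O: "orientation star_V star_E star_H star_end star_in star_out star_undir eo ho"
  shows "\<exists>i\<in>{1, 2, 3}. ho i \<noteq> Away"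
proof -
  note G = star_gadget
  have "card {h \<in> star_H. star_end h = 0} < star_in 0"
    by (simp only: star_H_def Collect_insert_filter) (simp add: star_simps)
  then obtain e where e: "e \<in> star_E" "0 \<in> e" "eo e = Some 0"
    using orientation_incoming_edge[OF G O] by (auto simp: star_V_def)
  then obtain i where i: "i \<in> {1, 2, 3}" "e = {0, i}" by (auto simp: star_E_def)
  have "ho i \<noteq> Away"
  proof (rule orientation_outgoing_edge_blocks_away[OF G O])
    show "i \<in> star_V" "star_out i \<le> 1" using i by (auto simp: star_V_def star_out_def)
    show "e \<in> star_E" "i \<in> e" "eo e \<noteq> None" "eo e \<noteq> Some i" using e i by auto
    show "i \<in> star_H" "star_end i = i" using i by (auto simp: star_H_def star_end_def)
  qed
  with i show ?thesis by blast
qed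

text \<open>The direction a companion half-edge takes so that its leaf, whose edge is undirected,
  has exactly one incoming and one outgoing half-edge.\<close>

definition flip :: "hdir \<Rightarrow> hdir" where
  "flip d = (if d = Toward then Away else Toward)"

definition star_eo :: "nat \<Rightarrow> nat set \<Rightarrow> nat option" where
  "star_eo i e = (if e = {0, i} then Some 0 else None)"

definition star_ho :: "nat \<Rightarrow> (nat \<Rightarrow> hdir) \<Rightarrow> nat \<Rightarrow> hdir" where
  "star_ho i d h = (if h = i then Toward else if h = i + 3 then Undirected
                    else if h \<le> 3 then d h else flip (d (h - 3)))"

lemma star_ho_terminal:
  assumes "i \<in> {1, 2, 3}" "j \<in> {1, 2, 3}" "d i = Toward"
  shows "star_ho i d j = d j"
  using assms by (auto simp: star_ho_def)

lemma star_orientation: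
  assumes "i \<in> {1, 2, 3}" "d i = Toward" "\<forall>j\<in>{1, 2, 3}. d j \<noteq> Undirected"
  shows "orientation star_V star_E star_H star_end star_in star_out star_undir
           (star_eo i) (star_ho i d)"
  using assms unfolding orientation_def
  apply (simp only: star_V_def star_E_def star_H_def Collect_insert_filter ball_simps)
  apply (cases "d 1"; cases "d 2"; cases "d 3"; elim insertE emptyE;
         simp add: star_eo_def star_ho_def flip_def star_simps)
  done

lemma star_extends:
  assumes "d1 \<noteq> Undirected" "d2 \<noteq> Undirected" "d3 \<noteq> Undirected"
    and "d1 = Toward \<or> d2 = Toward \<or> d3 = Toward"
  shows "\<exists>eo ho. orientation star_V star_E star_H star_end star_in star_out star_undir eo ho
                 \<and> ho 1 = d1 \<and> ho 2 = d2 \<and> ho 3 = d3"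
proof -
  define d where "d j = (if j = 1 then d1 else if j = 2 then d2 else d3)" for j :: nat
  have "d 1 = Toward \<or> d 2 = Toward \<or> d 3 = Toward" using assms(4) by (simp add: d_def)
  then obtain i where i: "i \<in> {1, 2, 3}" "d i = Toward" by blast
  have "\<forall>j\<in>{1, 2, 3}. d j \<noteq> Undirected" using assms(1-3) by (auto simp: d_def)
  with i have orientation: "orientation star_V star_E star_H star_end star_in star_out star_undir
                 (star_eo i) (star_ho i d)"
    by (rule star_orientation)
  have terminal: "star_ho i d j = d j" if "j \<in> {1, 2, 3}" for j
    using i(1) that i(2) by (rule star_ho_terminal)
  have "star_ho i d 1 = d1" "star_ho i d 2 = d2" "star_ho i d 3 = d3"
    using terminal by (simp_all add: d_def)
  with orientation show ?thesis by blast
qed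

theorem lemma5:
  shows "\<exists>(V::nat set) (E::nat set set) (Hs::nat set) (endp::nat \<Rightarrow> nat)
           (\<rho>::nat \<Rightarrow> nat) (\<delta>::nat \<Rightarrow> nat) (\<theta>::nat \<Rightarrow> nat) e1 e2 e3.
     gadget V E Hs endp \<rho> \<delta> \<theta> \<and>
     e1 \<in> Hs \<and> e2 \<in> Hs \<and> e3 \<in> Hs \<and> e1 \<noteq> e2 \<and> e1 \<noteq> e3 \<and> e2 \<noteq> e3 \<and>
     (\<forall>v\<in>V. \<rho> v \<le> 1 \<and> \<delta> v \<le> 1) \<and>
     (\<forall>d1 d2 d3. d1 \<noteq> Undirected \<and> d2 \<noteq> Undirected \<and> d3 \<noteq> Undirected \<and>
        (d1 = Toward \<or> d2 = Toward \<or> d3 = Toward) \<longrightarrow>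
        (\<exists>eo ho. orientation V E Hs endp \<rho> \<delta> \<theta> eo ho \<and>
                 ho e1 = d1 \<and> ho e2 = d2 \<and> ho e3 = d3)) \<and>
     \<not> (\<exists>eo ho. orientation V E Hs endp \<rho> \<delta> \<theta> eo ho \<and>
                 ho e1 = Away \<and> ho e2 = Away \<and> ho e3 = Away)"
proof -
  have terminals: "1 \<in> star_H" "2 \<in> star_H" "3 \<in> star_H" by (simp_all add: star_H_def)
  have capacities: "\<forall>v\<in>star_V. star_in v \<le> 1 \<and> star_out v \<le> 1"
    by (simp add: star_in_def star_out_def)
  have distinct: "(1::nat) \<noteq> 2" "(1::nat) \<noteq> 3" "(2::nat) \<noteq> 3" by simp_all
  have extends: "\<forall>d1 d2 d3. d1 \<noteq> Undirected \<and> d2 \<noteq> Undirected \<and> d3 \<noteq> Undirected \<and>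
        (d1 = Toward \<or> d2 = Toward \<or> d3 = Toward) \<longrightarrow>
        (\<exists>eo ho. orientation star_V star_E star_H star_end star_in star_out star_undir eo ho \<and>
                 ho 1 = d1 \<and> ho 2 = d2 \<and> ho 3 = d3)"
    using star_extends by blast
  have no_all_away: "\<not> (\<exists>eo ho. orientation star_V star_E star_H star_end star_in star_out
                          star_undir eo ho \<and> ho 1 = Away \<and> ho 2 = Away \<and> ho 3 = Away)"
  proof clarify
    fix eo ho
    assume "orientation star_V star_E star_H star_end star_in star_out star_undir eo ho"
      and "ho 1 = Away" "ho 2 = Away" "ho 3 = Away"
    then show False using star_some_terminal_not_away by fastforce
  qed
  show ?thesis
    by (rule exI[of _ star_V], rule exI[of _ star_E], rule exI[of _ star_H],
        rule exI[of _ star_end], rule exI[of _ star_in], rule exI[of _ star_out],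
        rule exI[of _ star_undir], rule exI[of _ 1], rule exI[of _ 2], rule exI[of _ 3])
       (intro conjI star_gadget terminals distinct capacities extends no_all_away)
qed

end
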